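(* Let $A\in N_C$ be a concept name, let $E,F,G$ be regular role expressions, and let $C_0$ be an $\mathcal{FL}_{\bot\mathit{reg}}$ concept description. (1) If $C_0$ does not contain $\bot$ and does not contain the concept name $A$, then $\forall E.A\sqcap\forall F.\bot\sqcap C_0\sqsubseteq\forall G.A$ holds if and only if $\forall E.A\sqcap\forall F.\bot\sqsubseteq\forall G.A$ holds. (2) If $C_0$ does not contain $\bot$, then $\forall F.\bot\sqcap C_0\sqsubseteq\forall G.\bot$ holds if and only if $\forall F.\bot\sqsubseteq\forall G.\bot$ holds. Here a subsumption $X\sqsubseteq Y$ "holds" means $X^{\mathcal I}\subseteq Y^{\mathcal I}$ for every interpretation $\mathcal I$.
   Context: Let $N_C$ and $N_R$ be disjoint countably infinite sets of concept names and role names. Regular role expressions are generated by $E ::= \emptyset \mid \varepsilon \mid r \mid (E+E) \mid (EE) \mid E^{*}$ with $r\in N_R$, with languages $\mathcal L(E)\subseteq N_R^*$ defined as usual. $\mathcal{FL}_{\bot\mathit{reg}}$ concept descriptions are generated by $C ::= A \mid \top \mid \bot \mid (C\sqcap C) \mid \forall E.C$ with $A\in N_C$. An interpretation $\mathcal I=(\Delta^{\mathcal I},\cdot^{\mathcal I})$ has nonempty domain, $A^{\mathcal I}\subseteq\Delta^{\mathcal I}$, $r^{\mathcal I}\subseteq(\Delta^{\mathcal I})^2$; $E^{\mathcal I}$ is the union over words $r_1\cdots r_n\in\mathcal L(E)$ of $r_1^{\mathcal I}\circ\cdots\circ r_n^{\mathcal I}$ (identity for the empty word); $\top^{\mathcal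 I}=\Delta^{\mathcal I}$, $\bot^{\mathcal I}=\emptyset$, $(C\sqcap D)^{\mathcal I}=C^{\mathcal I}\cap D^{\mathcal I}$, $(\forall E.C)^{\mathcal I}=\{x\mid y\in C^{\mathcal I}$ for all $y$ with $(x,y)\in E^{\mathcal I}\}$. *)

theory Defs
  imports Main "HOL-Library.Countable_Set"
begin

datatype 'r rexp = Empty | Eps | Role 'r | Plus "'r rexp" "'r rexp"
  | Conc "'r rexp" "'r rexp" | Star "'r rexp"

fun lang :: "'r rexp \<Rightarrow> 'r list set" where
  "lang Empty = {}"
| "lang Eps = {[]}"
| "lang (Role r) = {[r]}"
| "lang (Plus e f) = lang e \<union> lang f"
| "lang (Conc e f) = {u @ v | u v. u \<in> lang e \<and> v \<in> lang f}"
| "lang (Star e) = {concat ws | ws. set ws \<subseteq> lang e}"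

datatype ('c,'r) concept = CName 'c | Top | Bot | And "('c,'r) concept" "('c,'r) concept"
  | All "'r rexp" "('c,'r) concept"

record ('d,'c,'r) interp =
  dom :: "'d set"
  cext :: "'c \<Rightarrow> 'd set"
  rext :: "'r \<Rightarrow> ('d \<times> 'd) set"

definition is_interp :: "('d,'c,'r) interp \<Rightarrow> bool" where
  "is_interp I \<longleftrightarrow> dom I \<noteq> {} \<and> (\<forall>A. cext I A \<subseteq> dom I)
     \<and> (\<forall>r. rext I r \<subseteq> dom I \<times> dom I)"

fun word_ext :: "('d,'c,'r) interp \<Rightarrow> 'r list \<Rightarrow> ('d \<times> 'd) set" where
  "word_ext I [] = Id_on (dom I)"
| "word_ext I (r # w) = rext I r O word_ext I w"

definition rexp_ext :: "('d,'c,'r) interp \<Rightarrow> 'r rexp \<Rightarrow> ('d \<times> 'd) set" where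
  "rexp_ext I E = (\<Union>w\<in>lang E. word_ext I w)"

fun cext_of :: "('d,'c,'r) interp \<Rightarrow> ('c,'r) concept \<Rightarrow> 'd set" where
  "cext_of I (CName A) = cext I A"
| "cext_of I Top = dom I"
| "cext_of I Bot = {}"
| "cext_of I (And C D) = cext_of I C \<inter> cext_of I D"
| "cext_of I (All E C) = {x \<in> dom I. \<forall>y. (x, y) \<in> rexp_ext I E \<longrightarrow> y \<in> cext_of I C}"

definition subsumed :: "'d itself \<Rightarrow> ('c,'r) concept \<Rightarrow> ('c,'r) concept \<Rightarrow> bool" where
  "subsumed _ C D \<longleftrightarrow> (\<forall>I :: ('d,'c,'r) interp. is_interp I \<longrightarrow> cext_of I C \<subseteq> cext_of I D)"

fun has_bot :: "('c,'r) concept \<Rightarrow> bool" where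
  "has_bot Bot = True"
| "has_bot (And C D) = (has_bot C \<or> has_bot D)"
| "has_bot (All E C) = has_bot C"
| "has_bot _ = False"

fun cnames :: "('c,'r) concept \<Rightarrow> 'c set" where
  "cnames (CName A) = {A}"
| "cnames (And C D) = cnames C \<union> cnames D"
| "cnames (All E C) = cnames C"
| "cnames _ = {}"

end

theory Submission
  imports Defs
begin

text \<open>Given an interpretation, reinterpret every concept name occurring in \<open>C\<^sub>0\<close> as the
  whole domain. Concepts not mentioning these names (here \<open>\<forall>E.A\<close>, \<open>\<forall>F.\<bottom>\<close>, \<open>\<forall>G.A\<close>,
  \<open>\<forall>G.\<bottom>\<close>) keep their extensions, while the \<open>\<bottom>\<close>-free concept \<open>C\<^sub>0\<close> now denotes the whole
  domain. So a counterexample to the subsumption without the conjunct \<open>C\<^sub>0\<close> becomes one with it;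
  the converse holds because a conjunct only shrinks the left-hand side.\<close>

lemma word_ext_cong:
  "dom I = dom J \<Longrightarrow> rext I = rext J \<Longrightarrow> word_ext I w = word_ext J w"
  by (induction w) auto

lemma rexp_ext_cong:
  "dom I = dom J \<Longrightarrow> rext I = rext J \<Longrightarrow> rexp_ext I E = rexp_ext J E"
  unfolding rexp_ext_def using word_ext_cong by metis

lemma word_ext_subset_dom: "is_interp I \<Longrightarrow> word_ext I w \<subseteq> dom I \<times> dom I"
  by (induction w) (auto simp: is_interp_def Id_on_def)

lemma rexp_ext_subset_dom: "is_interp I \<Longrightarrow> rexp_ext I E \<subseteq> dom I \<times> dom I"
  unfolding rexp_ext_def using word_ext_subset_dom by blast

lemma cext_of_subset_dom: "is_interp I \<Longrightarrow> cext_of I C \<subseteq> dom I"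
  by (induction C) (auto simp: is_interp_def)

lemma cext_of_cong:
  assumes "dom I = dom J" and "rext I = rext J" and "\<forall>B \<in> cnames C. cext I B = cext J B"
  shows "cext_of I C = cext_of J C"
  using assms(3) by (induction C) (auto simp: assms(1) rexp_ext_cong[OF assms(1,2)])

lemma cext_of_eq_dom:
  assumes "is_interp I" and "\<not> has_bot C" and "\<forall>B \<in> cnames C. cext I B = dom I"
  shows "cext_of I C = dom I"
  using assms(2,3)
proof (induction C)
  case (All E C)
  then show ?case
    using rexp_ext_subset_dom[OF assms(1), of E] by auto
qed auto

lemma cext_of_map_concept:
  fixes I :: "('d, 'b, 'r) interp" and f :: "'a \<Rightarrow> 'b" and C :: "('a, 'r) concept"
  defines "I\<^sub>f \<equiv> \<lparr>dom = dom I, cext = cext I \<circ> f, rext = rext I\<rparr>"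
  shows "cext_of I (map_concept f id C) = cext_of I\<^sub>f C"
proof -
  have "rexp_ext I\<^sub>f E = rexp_ext I E" for E
    by (rule rexp_ext_cong) (simp_all add: I\<^sub>f_def)
  then show ?thesis
    by (induction C) (simp_all add: I\<^sub>f_def rexp.map_id)
qed

lemma subsumed_map_concept:
  fixes T :: "'d itself" and f :: "'a \<Rightarrow> 'b" and C D :: "('a, 'r) concept"
  assumes "subsumed T C D"
  shows "subsumed T (map_concept f id C) (map_concept f id D)"
  unfolding subsumed_def
proof (intro allI impI)
  fix I :: "('d, 'b, 'r) interp"
  assume "is_interp I"
  then have "is_interp \<lparr>dom = dom I, cext = cext I \<circ> f, rext = rext I\<rparr>"
    by (auto simp: is_interp_def)
  then show "cext_of I (map_concept f id C) \<subseteq> cext_of I (map_concept f id D)"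
    using assms by (simp add: subsumed_def cext_of_map_concept)
qed

lemma subsumed_And_left: "subsumed T C D \<Longrightarrow> subsumed T (And C C') D"
  by (auto simp: subsumed_def)

lemma subsumed_And_irrelevant_iff:
  fixes T :: "'d itself" and C C\<^sub>0 D :: "('c, 'r) concept"
  assumes "\<not> has_bot C\<^sub>0" and "cnames C\<^sub>0 \<inter> (cnames C \<union> cnames D) = {}"
  shows "subsumed T (And C C\<^sub>0) D \<longleftrightarrow> subsumed T C D"
proof
  assume sub: "subsumed T (And C C\<^sub>0) D"
  show "subsumed T C D"
    unfolding subsumed_def
  proof (intro allI impI)
    fix I :: "('d, 'c, 'r) interp"
    assume I: "is_interp I"
    define J where "J = I\<lparr>cext := \<lambda>B. if B \<in> cnames C\<^sub>0 then dom I else cext I B\<rparr>"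
    have J: "is_interp J"
      using I by (auto simp: J_def is_interp_def)
    have J_C\<^sub>0: "cext_of J C\<^sub>0 = dom I"
      using cext_of_eq_dom[OF J assms(1)] by (simp add: J_def)
    have J_unchanged: "cext_of J X = cext_of I X" if "cnames X \<inter> cnames C\<^sub>0 = {}" for X
      using that unfolding J_def by (intro cext_of_cong) auto
    have "cext_of J C = cext_of I C" "cext_of J D = cext_of I D"
      using J_unchanged assms(2) by blast+
    moreover have "cext_of J (And C C\<^sub>0) \<subseteq> cext_of J D"
      using sub J by (simp add: subsumed_def)
    ultimately show "cext_of I C \<subseteq> cext_of I D"
      using J_C\<^sub>0 cext_of_subset_dom[OF I, of C] by auto
  qed
qed (rule subsumed_And_left)

text \<open>In part (2) of the theorem the right-hand subsumption lives over its own type of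
  concept names.\<close>

lemma subsumed_All_Bot_name_type:
  "subsumed T (All F Bot :: ('a, 'r) concept) (All G Bot)
     \<longleftrightarrow> subsumed T (All F Bot :: ('b, 'r) concept) (All G Bot)"
  using subsumed_map_concept[of T "All F Bot" "All G Bot" "\<lambda>_. undefined"]
    subsumed_map_concept[of T "All F Bot" "All G Bot" "\<lambda>_. undefined"]
  by (auto simp: rexp.map_id)

theorem lemma1:
  fixes A :: 'c and E F G :: "'r rexp" and C0 :: "('c,'r) concept"
    and T :: "'d itself"
  assumes "countable (UNIV :: 'c set)" and "infinite (UNIV :: 'c set)"
    and "countable (UNIV :: 'r set)" and "infinite (UNIV :: 'r set)"
    and "infinite (UNIV :: 'd set)"
  shows "(\<not> has_bot C0 \<and> A \<notin> cnames C0 \<longrightarrow>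
           (subsumed T (And (And (All E (CName A)) (All F Bot)) C0) (All G (CName A))
            \<longleftrightarrow> subsumed T (And (All E (CName A)) (All F Bot)) (All G (CName A))))
       \<and> (\<not> has_bot C0 \<longrightarrow>
           (subsumed T (And (All F Bot) C0) (All G Bot)
            \<longleftrightarrow> subsumed T (All F Bot) (All G Bot)))"
proof (intro conjI impI)
  assume "\<not> has_bot C0 \<and> A \<notin> cnames C0"
  then show "subsumed T (And (And (All E (CName A)) (All F Bot)) C0) (All G (CName A))
      \<longleftrightarrow> subsumed T (And (All E (CName A)) (All F Bot)) (All G (CName A))"
    by (intro subsumed_And_irrelevant_iff) auto
next
  assume "\<not> has_bot C0"
  then have "subsumed T (And (All F Bot) C0) (All G Bot)
      \<longleftrightarrow> subsumed T (All F Bot :: ('c, 'r) concept) (All G Bot)"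
    by (intro subsumed_And_irrelevant_iff) auto
  also have "\<dots> \<longleftrightarrow> subsumed T (All F Bot) (All G Bot)"
    by (rule subsumed_All_Bot_name_type)
  finally show "subsumed T (And (All F Bot) C0) (All G Bot)
      \<longleftrightarrow> subsumed T (All F Bot) (All G Bot)" .
qed

end
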